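(* Let $R$ be a finite local Frobenius ring which is not a field, with fixed primitive additive character $\psi$, and let $\tau$ be a non-primitive multiplicative character of $R$. Then: (i) $K_\tau(a)=0$ for every $a\in R\setminus R^\times$; (ii) if $R$ has odd characteristic, then moreover $K_\tau(a)=0$ for every $a\in R$ with $a\notin (R^\times)^2$ (the set of squares of units).
   Context: All rings are finite and commutative with identity; $R^\times$ is the unit group; $M$ is the maximal ideal of the local ring $R$. An additive character $(R,+)\to\mathbb{C}^*$ is primitive if the only ideal on which it is identically $1$ is $(0)$; $R$ is Frobenius if such a character exists. A multiplicative character is a homomorphism $R^\times\to\mathbb{C}^*$. Its conductor is: $R$ if the character is trivial; otherwise the largest ideal $I\subseteq M$ such that the character is identically $1$ on the subgroup $1+I$. A multiplicative character is primitive if its conductor is $(0)$. The twisted Kloosterman sum is $K_\tau(a)=\sum_{u\in R^\times}\tau(u)\psi(u+au^{-1})$. "Odd characteristic" for a local ring means the residue field $R/M$ has odd characteristic. *)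

theory Defs
  imports Complex_Main
begin

text \<open>Ideals of a commutative ring (type-class idiom; the ring is the whole type).\<close>
definition is_ideal :: "'a::comm_ring_1 set \<Rightarrow> bool" where
  "is_ideal I \<longleftrightarrow> 0 \<in> I \<and> (\<forall>x\<in>I. \<forall>y\<in>I. x + y \<in> I) \<and> (\<forall>r. \<forall>x\<in>I. r * x \<in> I)"

definition is_maximal_ideal :: "'a::comm_ring_1 set \<Rightarrow> bool" where
  "is_maximal_ideal M \<longleftrightarrow> is_ideal M \<and> M \<noteq> UNIV \<and>
     (\<forall>J. is_ideal J \<and> M \<subseteq> J \<longrightarrow> J = M \<or> J = UNIV)"

definition local_ring :: "'a::comm_ring_1 itself \<Rightarrow> bool" where
  "local_ring _ \<longleftrightarrow> (\<exists>!M::'a set. is_maximal_ideal M)"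

definition max_ideal :: "'a::comm_ring_1 set" where
  "max_ideal = (THE M. is_maximal_ideal M)"

definition is_field_ring :: "'a::comm_ring_1 itself \<Rightarrow> bool" where
  "is_field_ring _ \<longleftrightarrow> (0::'a) \<noteq> 1 \<and> (\<forall>x::'a. x \<noteq> 0 \<longrightarrow> x dvd 1)"

definition units :: "'a::comm_ring_1 set" where
  "units = {u. u dvd 1}"

definition unit_inv :: "'a::comm_ring_1 \<Rightarrow> 'a" where
  "unit_inv u = (THE v. u * v = 1)"

definition add_char :: "('a::comm_ring_1 \<Rightarrow> complex) \<Rightarrow> bool" where
  "add_char psi \<longleftrightarrow> (\<forall>x y. psi (x + y) = psi x * psi y) \<and> (\<forall>x. psi x \<noteq> 0)"

definition primitive_add_char :: "('a::comm_ring_1 \<Rightarrow> complex) \<Rightarrow> bool" where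
  "primitive_add_char psi \<longleftrightarrow> add_char psi \<and>
     (\<forall>I. is_ideal I \<and> (\<forall>x\<in>I. psi x = 1) \<longrightarrow> I = {0})"

text \<open>Multiplicative character R^\<times> \<rightarrow> C^* (only its values on units matter).\<close>
definition mult_char :: "('a::comm_ring_1 \<Rightarrow> complex) \<Rightarrow> bool" where
  "mult_char tau \<longleftrightarrow> (\<forall>u\<in>units. \<forall>v\<in>units. tau (u * v) = tau u * tau v) \<and>
     (\<forall>u\<in>units. tau u \<noteq> 0)"

definition trivial_mult_char :: "('a::comm_ring_1 \<Rightarrow> complex) \<Rightarrow> bool" where
  "trivial_mult_char tau \<longleftrightarrow> (\<forall>u\<in>units. tau u = 1)"

definition conductor :: "('a::comm_ring_1 \<Rightarrow> complex) \<Rightarrow> 'a set" where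
  "conductor tau = (if trivial_mult_char tau then UNIV
     else (GREATEST I. is_ideal I \<and> I \<subseteq> max_ideal \<and> (\<forall>x\<in>I. tau (1 + x) = 1)))"

definition primitive_mult_char :: "('a::comm_ring_1 \<Rightarrow> complex) \<Rightarrow> bool" where
  "primitive_mult_char tau \<longleftrightarrow> conductor tau = {0}"

definition kloosterman :: "('a::comm_ring_1 \<Rightarrow> complex) \<Rightarrow> ('a \<Rightarrow> complex) \<Rightarrow> 'a \<Rightarrow> complex" where
  "kloosterman psi tau a = (\<Sum>u\<in>units. tau u * psi (u + a * unit_inv u))"

text \<open>Characteristic of the residue field R/M: least n > 0 with n\<cdot>1 \<in> M.\<close>
definition residue_char :: "'a::comm_ring_1 itself \<Rightarrow> nat" where
  "residue_char _ = (LEAST n. n > 0 \<and> (of_nat n :: 'a) \<in> max_ideal)"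

definition unit_squares :: "'a::comm_ring_1 set" where
  "unit_squares = {u * u | u. u \<in> units}"

end

theory Submission
  imports Defs
begin

text \<open>
  Let \<open>I\<close> be a nonzero ideal with \<open>I\<^sup>2 = 0\<close> on which \<open>\<tau>(1 + _)\<close> is trivial; non-primitivity
  of \<open>\<tau>\<close> provides one, generated by a nonzero element of the conductor annihilated by \<open>M\<close>.
  For \<open>x \<in> I\<close> the substitution \<open>u \<mapsto> u(1 + x)\<close> permutes \<open>R\<^sup>\<times>\<close>, fixes \<open>\<tau>(u)\<close>, and, since
  \<open>(1 + x)\<^sup>-\<^sup>1 = 1 - x\<close>, multiplies \<open>\<psi>(u + a u\<^sup>-\<^sup>1)\<close> by \<open>\<psi>((u - a u\<^sup>-\<^sup>1) x)\<close>. Averaging over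
  \<open>x \<in> I\<close> therefore makes \<open>K\<^sub>\<tau>(a)\<close> vanish as soon as every \<open>u - a u\<^sup>-\<^sup>1\<close> is a unit, because
  \<open>x \<mapsto> \<psi>(c x)\<close> is a nontrivial character of \<open>I\<close> for a unit \<open>c\<close>. This holds when \<open>a \<in> M\<close>;
  and if \<open>u - a u\<^sup>-\<^sup>1 \<in> M\<close> for a unit \<open>a\<close>, then \<open>a \<equiv> u\<^sup>2\<close> mod \<open>M\<close>, which Newton's iteration
  lifts to \<open>a = v\<^sup>2\<close> when \<open>2\<close> is invertible, \<open>M\<close> being nil.
\<close>

lemma unit_inv_eq:
  fixes u v :: "'a::comm_ring_1"
  assumes "u * v = 1"
  shows "unit_inv u = v"
  unfolding unit_inv_def
proof (rule the_equality)
  show "u * v = 1" by fact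
  fix w assume "u * w = 1"
  then have "w = w * (u * v)" using assms by simp
  also have "\<dots> = (u * w) * v" by (simp add: algebra_simps)
  finally show "w = v" using \<open>u * w = 1\<close> by simp
qed

lemma unit_inv_right:
  fixes u :: "'a::comm_ring_1"
  assumes "u \<in> units"
  shows "u * unit_inv u = 1"
proof -
  from assms obtain v where "1 = u * v" unfolding units_def by (auto elim: dvdE)
  then show ?thesis using unit_inv_eq[of u v] by simp
qed

lemma units_if_mult_eq_one:
  fixes u v :: "'a::comm_ring_1"
  shows "u * v = 1 \<Longrightarrow> u \<in> units"
  unfolding units_def by (simp add: dvdI[of 1 u v])

lemma unit_inv_in_units:
  fixes u :: "'a::comm_ring_1"
  assumes "u \<in> units"
  shows "unit_inv u \<in> units"
  using units_if_mult_eq_one[of "unit_inv u" u] unit_inv_right[OF assms] by (simp add: mult.commute)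

lemma one_in_units: "(1::'a::comm_ring_1) \<in> units"
  unfolding units_def by simp

lemma units_mult_closed:
  fixes u v :: "'a::comm_ring_1"
  shows "u \<in> units \<Longrightarrow> v \<in> units \<Longrightarrow> u * v \<in> units"
  unfolding units_def using mult_dvd_mono[of u 1 v 1] by simp

lemma units_mult_left:
  fixes u v :: "'a::comm_ring_1"
  shows "u * v \<in> units \<Longrightarrow> u \<in> units"
  unfolding units_def mem_Collect_eq by (rule dvd_mult_left)

lemma mult_unit_eq_zero:
  fixes x u :: "'a::comm_ring_1"
  assumes "u \<in> units" and "x * u = 0"
  shows "x = 0"
proof -
  have "x = (x * u) * unit_inv u" using unit_inv_right[OF assms(1)] by (simp add: mult.assoc)
  then show ?thesis using assms(2) by simp
qed

lemma ideal_mult: "is_ideal I \<Longrightarrow> x \<in> I \<Longrightarrow> r * x \<in> I"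
  unfolding is_ideal_def by blast

lemma ideal_add: "is_ideal I \<Longrightarrow> x \<in> I \<Longrightarrow> y \<in> I \<Longrightarrow> x + y \<in> I"
  unfolding is_ideal_def by blast

lemma ideal_zero: "is_ideal I \<Longrightarrow> 0 \<in> I"
  unfolding is_ideal_def by blast

lemma ideal_uminus: "is_ideal I \<Longrightarrow> x \<in> I \<Longrightarrow> - x \<in> I"
  using ideal_mult[of I x "-1"] by simp

lemma ideal_diff: "is_ideal I \<Longrightarrow> x \<in> I \<Longrightarrow> y \<in> I \<Longrightarrow> x - y \<in> I"
  using ideal_add[of I x "-y"] ideal_uminus[of I y] by simp

lemma ideal_power:
  assumes "is_ideal I" "x \<in> I" "k > 0"
  shows "x ^ k \<in> I"
proof -
  obtain j where "k = Suc j" using assms(3) by (cases k) auto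
  then show ?thesis using ideal_mult[OF assms(1,2), of "x ^ j"] by (simp add: mult.commute)
qed

lemma is_ideal_principal: "is_ideal (range (\<lambda>r. r * x))"
  unfolding is_ideal_def
proof (intro conjI ballI allI)
  show "0 \<in> range (\<lambda>r. r * x)" by (rule range_eqI[where x=0]) simp
  fix y z assume "y \<in> range (\<lambda>r. r * x)" "z \<in> range (\<lambda>r. r * x)"
  then obtain r s where "y = r * x" "z = s * x" by blast
  then show "y + z \<in> range (\<lambda>r. r * x)" by (metis distrib_right rangeI)
next
  fix t y assume "y \<in> range (\<lambda>r. r * x)"
  then obtain r where "y = r * x" by blast
  then show "t * y \<in> range (\<lambda>r. r * x)" by (metis mult.assoc rangeI)
qed

lemma ideal_with_unit_is_UNIV:
  assumes "is_ideal I" "u \<in> I" "u \<in> units"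
  shows "I = UNIV"
proof -
  have "r \<in> I" for r
    using ideal_mult[OF assms(1,2), of "r * unit_inv u"] unit_inv_right[OF assms(3)]
    by (simp add: algebra_simps)
  then show ?thesis by blast
qed

subsection \<open>Finite local rings\<close>

lemma max_ideal_maximal:
  assumes "local_ring TYPE('a::comm_ring_1)"
  shows "is_maximal_ideal (max_ideal::'a set)"
  using assms unfolding local_ring_def max_ideal_def by (rule theI')

lemma is_ideal_max_ideal:
  assumes "local_ring TYPE('a::comm_ring_1)"
  shows "is_ideal (max_ideal::'a set)"
  using max_ideal_maximal[OF assms] unfolding is_maximal_ideal_def by blast

lemma unit_notin_max_ideal:
  assumes "local_ring TYPE('a::comm_ring_1)" "(u::'a) \<in> units"
  shows "u \<notin> max_ideal"
  using ideal_with_unit_is_UNIV[OF is_ideal_max_ideal[OF assms(1)] _ assms(2)]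
    max_ideal_maximal[OF assms(1)] unfolding is_maximal_ideal_def by blast

lemma nonunit_in_max_ideal:
  assumes loc: "local_ring TYPE('a::{comm_ring_1,finite})" and x: "(x::'a) \<notin> units"
  shows "x \<in> max_ideal"
proof -
  define S where "S = {J::'a set. is_ideal J \<and> J \<noteq> UNIV}"
  have "1 \<notin> range (\<lambda>r. r * x)"
    using x unfolding units_def by (auto simp: dvd_def mult.commute)
  then have "range (\<lambda>r. r * x) \<in> S"
    unfolding S_def using is_ideal_principal by blast
  then obtain J where J: "J \<in> S" "range (\<lambda>r. r * x) \<subseteq> J" and Jmax: "\<forall>J'\<in>S. J \<subseteq> J' \<longrightarrow> J = J'"
    using finite_has_maximal2[of S "range (\<lambda>r. r * x)"] by auto
  have "is_maximal_ideal J"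
    unfolding is_maximal_ideal_def
  proof (intro conjI allI impI)
    show "is_ideal J" "J \<noteq> UNIV" using J(1) unfolding S_def by auto
    fix J' assume "is_ideal J' \<and> J \<subseteq> J'"
    then show "J' = J \<or> J' = UNIV" using Jmax unfolding S_def by blast
  qed
  then have "J = max_ideal"
    using loc max_ideal_maximal[OF loc] unfolding local_ring_def by blast
  then show ?thesis using J(2) by (metis mult_1 rangeI subset_iff)
qed

lemma unit_add_max_ideal:
  assumes loc: "local_ring TYPE('a::{comm_ring_1,finite})" and "(u::'a) \<in> units" "m \<in> max_ideal"
  shows "u + m \<in> units"
proof (rule ccontr)
  assume "u + m \<notin> units"
  then have "(u + m) - m \<in> max_ideal"
    using ideal_diff[OF is_ideal_max_ideal[OF loc]] nonunit_in_max_ideal[OF loc] assms(3) by blast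
  then show False using unit_notin_max_ideal[OF loc assms(2)] by simp
qed

lemma unit_diff_max_ideal:
  assumes loc: "local_ring TYPE('a::{comm_ring_1,finite})" and "(u::'a) \<in> units" "m \<in> max_ideal"
  shows "u - m \<in> units"
  using unit_add_max_ideal[OF assms(1,2) ideal_uminus[OF is_ideal_max_ideal[OF loc] assms(3)]] by simp

lemma max_ideal_nonzero:
  assumes loc: "local_ring TYPE('a::{comm_ring_1,finite})" and "\<not> is_field_ring TYPE('a)"
  shows "\<exists>x::'a. x \<noteq> 0 \<and> x \<in> max_ideal"
proof -
  have "(0::'a) \<noteq> 1"
    using ideal_with_unit_is_UNIV[OF is_ideal_max_ideal[OF loc] ideal_zero[OF is_ideal_max_ideal[OF loc]]]
      max_ideal_maximal[OF loc] unfolding is_maximal_ideal_def units_def by auto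
  then obtain x :: 'a where "x \<noteq> 0" "\<not> x dvd 1" using assms(2) unfolding is_field_ring_def by blast
  then show ?thesis using nonunit_in_max_ideal[OF loc, of x] unfolding units_def by auto
qed

lemma max_ideal_nilpotent:
  assumes loc: "local_ring TYPE('a::{comm_ring_1,finite})" and m: "(m::'a) \<in> max_ideal"
  shows "\<exists>k. m ^ k = 0"
proof -
  have "\<not> inj (\<lambda>i::nat. m ^ i)"
    using finite_imageD[of "\<lambda>i::nat. m ^ i" UNIV] by auto
  then obtain i j where "i \<noteq> j" "m ^ i = m ^ j" unfolding inj_def by blast
  then obtain i j where "i < j" "m ^ i = m ^ j" by (metis linorder_neqE_nat)
  then obtain d where d: "d > 0" "j = i + d" using less_imp_add_positive by blast
  have "m ^ i * (1 - m ^ d) = 0" using \<open>m ^ i = m ^ j\<close> d(2) by (simp add: power_add algebra_simps)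
  moreover have "1 - m ^ d \<in> units"
    using unit_diff_max_ideal[OF loc one_in_units ideal_power[OF is_ideal_max_ideal[OF loc] m d(1)]] .
  ultimately show ?thesis using mult_unit_eq_zero by blast
qed

lemma two_in_units:
  assumes loc: "local_ring TYPE('a::{comm_ring_1,finite})"
    and odd: "odd (residue_char TYPE('a))"
  shows "(2::'a) \<in> units"
proof (rule ccontr)
  let ?P = "\<lambda>n. n > 0 \<and> (of_nat n :: 'a) \<in> max_ideal"
  assume "(2::'a) \<notin> units"
  then have P2: "?P 2" using nonunit_in_max_ideal[OF loc] by simp
  have "\<not> ?P 1" using unit_notin_max_ideal[OF loc one_in_units] by simp
  have "(LEAST n. ?P n) \<le> 2" using Least_le[of ?P 2] P2 by blast
  moreover have "?P (LEAST n. ?P n)" using LeastI[of ?P 2] P2 by blast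
  ultimately have "(LEAST n. ?P n) = 2"
    using \<open>\<not> ?P 1\<close> by (metis One_nat_def le_Suc_eq le_zero_eq not_gr0 numeral_2_eq_2)
  then show False using odd unfolding residue_char_def by simp
qed

lemma socle_multiple:
  assumes loc: "local_ring TYPE('a::{comm_ring_1,finite})" and "(c::'a) \<noteq> 0"
  shows "\<exists>s. s * c \<noteq> 0 \<and> (\<forall>m\<in>max_ideal. s * c * m = 0)"
proof -
  define A where "A = {range (\<lambda>r. r * (s * c)) | s. s * c \<noteq> 0}"
  have "range (\<lambda>r. r * (1 * c)) \<in> A"
    unfolding A_def using assms(2) by (intro CollectI exI[of _ 1]) simp
  moreover have "finite A" by (rule finite)
  ultimately obtain P where "P \<in> A" and Pmin: "\<forall>P'\<in>A. P' \<subseteq> P \<longrightarrow> P = P'"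
    using finite_has_minimal2[of A] by blast
  then obtain s where s: "s * c \<noteq> 0" and P: "P = range (\<lambda>r. r * (s * c))" unfolding A_def by blast
  have "s * c * m = 0" if m: "m \<in> max_ideal" for m
  proof (rule ccontr)
    assume nz: "s * c * m \<noteq> 0"
    have "range (\<lambda>r. r * (s * c * m)) \<in> A"
      unfolding A_def using nz by (intro CollectI exI[of _ "s * m"]) (simp add: algebra_simps)
    moreover have "r * (s * c * m) = (r * m) * (s * c)" for r by (simp add: algebra_simps)
    then have "range (\<lambda>r. r * (s * c * m)) \<subseteq> P" unfolding P by (metis image_subset_iff rangeI)
    moreover have "s * c \<in> P" unfolding P by (rule range_eqI[where x=1]) simp
    ultimately have "s * c \<in> range (\<lambda>r. r * (s * c * m))" using Pmin by blast
    then obtain r where r: "s * c = r * (s * c * m)" by blast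
    have "s * c * (1 - r * m) = s * c - r * (s * c * m)" by (simp add: algebra_simps)
    also have "\<dots> = 0" using r by simp
    finally have "s * c * (1 - r * m) = 0" .
    moreover have "1 - r * m \<in> units"
      using unit_diff_max_ideal[OF loc one_in_units ideal_mult[OF is_ideal_max_ideal[OF loc] m]] .
    ultimately show False using s mult_unit_eq_zero by blast
  qed
  then show ?thesis using s by blast
qed

lemma mult_char_mult:
  "mult_char tau \<Longrightarrow> u \<in> units \<Longrightarrow> v \<in> units \<Longrightarrow> tau (u * v) = tau u * tau v"
  unfolding mult_char_def by blast

lemma mult_char_one: "mult_char tau \<Longrightarrow> tau (1::'a::comm_ring_1) = 1"
  unfolding mult_char_def using one_in_units[where 'a='a]
  by (metis mult_1 mult_cancel_right1)

lemma add_char_sum_ideal_eq_zero: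
  fixes psi :: "'a::comm_ring_1 \<Rightarrow> complex"
  assumes psi: "add_char psi" and I: "is_ideal I" "y0 \<in> I" and "psi y0 \<noteq> 1"
  shows "(\<Sum>y\<in>I. psi y) = 0"
proof -
  have "bij_betw (\<lambda>y. y0 + y) I I"
    by (rule bij_betw_byWitness[where f'="\<lambda>y. y - y0"])
      (use ideal_add[OF I] ideal_diff[OF I(1) _ I(2)] in auto)
  then have "(\<Sum>y\<in>I. psi y) = (\<Sum>y\<in>I. psi (y0 + y))"
    by (rule sum.reindex_bij_betw[symmetric])
  also have "\<dots> = psi y0 * (\<Sum>y\<in>I. psi y)"
    using psi unfolding add_char_def by (simp add: sum_distrib_left)
  finally have "(psi y0 - 1) * (\<Sum>y\<in>I. psi y) = 0" by (simp add: algebra_simps)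
  then show ?thesis using assms(4) by simp
qed

lemma add_char_sum_ideal_mult_unit_eq_zero:
  fixes psi :: "'a::comm_ring_1 \<Rightarrow> complex"
  assumes "add_char psi" "is_ideal I" "y0 \<in> I" "psi y0 \<noteq> 1" and c: "c \<in> units"
  shows "(\<Sum>x\<in>I. psi (c * x)) = 0"
proof -
  have cc: "c * unit_inv c = 1" "unit_inv c * c = 1"
    using unit_inv_right[OF c] by (simp_all add: mult.commute)
  have "bij_betw (\<lambda>x. c * x) I I"
    by (rule bij_betw_byWitness[where f'="\<lambda>x. unit_inv c * x"])
      (use cc ideal_mult[OF assms(2)] in \<open>auto simp: mult.assoc[symmetric]\<close>)
  then have "(\<Sum>x\<in>I. psi (c * x)) = (\<Sum>x\<in>I. psi x)"
    by (rule sum.reindex_bij_betw)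
  also have "\<dots> = 0" by (rule add_char_sum_ideal_eq_zero[OF assms(1-4)])
  finally show ?thesis .
qed

subsection \<open>The conductor\<close>

definition char_kernel_ideal :: "('a::comm_ring_1 \<Rightarrow> complex) \<Rightarrow> 'a set" where
  "char_kernel_ideal tau = {x \<in> max_ideal. \<forall>r. tau (1 + r * x) = 1}"

lemma is_ideal_char_kernel_ideal:
  fixes tau :: "'a::{comm_ring_1,finite} \<Rightarrow> complex"
  assumes loc: "local_ring TYPE('a)" and tau: "mult_char tau"
  shows "is_ideal (char_kernel_ideal tau)"
  unfolding is_ideal_def
proof (intro conjI ballI allI)
  have MI: "is_ideal (max_ideal::'a set)" by (rule is_ideal_max_ideal[OF loc])
  show "0 \<in> char_kernel_ideal tau"
    unfolding char_kernel_ideal_def using ideal_zero[OF MI] mult_char_one[OF tau] by simp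
  fix x y assume x: "x \<in> char_kernel_ideal tau" and y: "y \<in> char_kernel_ideal tau"
  then have xM: "x \<in> max_ideal" and yM: "y \<in> max_ideal" unfolding char_kernel_ideal_def by auto
  have "tau (1 + r * (x + y)) = 1" for r
  proof -
    define p where "p = 1 + r * x"
    have p: "p \<in> units" unfolding p_def
      by (rule unit_add_max_ideal[OF loc one_in_units ideal_mult[OF MI xM]])
    define q where "q = 1 + (r * unit_inv p) * y"
    have q: "q \<in> units" unfolding q_def
      by (rule unit_add_max_ideal[OF loc one_in_units ideal_mult[OF MI yM]])
    have "p * q = p + (p * unit_inv p) * r * y" unfolding q_def by (simp add: algebra_simps)
    also have "\<dots> = 1 + r * (x + y)" using unit_inv_right[OF p] unfolding p_def by (simp add: algebra_simps)
    finally have "tau (1 + r * (x + y)) = tau p * tau q"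
      using mult_char_mult[OF tau p q] by simp
    moreover have "tau p = 1" "tau q = 1"
      using x y unfolding char_kernel_ideal_def p_def q_def by auto
    ultimately show ?thesis by simp
  qed
  then show "x + y \<in> char_kernel_ideal tau"
    unfolding char_kernel_ideal_def using ideal_add[OF MI xM yM] by blast
next
  fix s x assume "x \<in> char_kernel_ideal tau"
  then show "s * x \<in> char_kernel_ideal tau"
    unfolding char_kernel_ideal_def
    using ideal_mult[OF is_ideal_max_ideal[OF loc]] by (auto simp: mult.assoc[symmetric])
qed

lemma conductor_eq_char_kernel_ideal:
  fixes tau :: "'a::{comm_ring_1,finite} \<Rightarrow> complex"
  assumes loc: "local_ring TYPE('a)" and tau: "mult_char tau" and "\<not> trivial_mult_char tau"
  shows "conductor tau = char_kernel_ideal tau"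
proof -
  let ?P = "\<lambda>I. is_ideal I \<and> I \<subseteq> max_ideal \<and> (\<forall>x\<in>I. tau (1 + x) = 1)"
  have "?P (char_kernel_ideal tau)"
    using is_ideal_char_kernel_ideal[OF loc tau] unfolding char_kernel_ideal_def
    by (fastforce dest: spec[where x=1])
  moreover have "I \<subseteq> char_kernel_ideal tau" if "?P I" for I
    using that ideal_mult[of I] unfolding char_kernel_ideal_def by blast
  ultimately have "(GREATEST I. ?P I) = char_kernel_ideal tau"
    by (intro Greatest_equality) auto
  then show ?thesis using assms(3) unfolding conductor_def by simp
qed

lemma nonprimitive_mult_char_kernel_nonzero:
  fixes tau :: "'a::{comm_ring_1,finite} \<Rightarrow> complex"
  assumes loc: "local_ring TYPE('a)" and "\<not> is_field_ring TYPE('a)"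
    and tau: "mult_char tau" and "\<not> primitive_mult_char tau"
  shows "\<exists>x. x \<noteq> 0 \<and> x \<in> char_kernel_ideal tau"
proof (cases "trivial_mult_char tau")
  case True
  obtain x :: 'a where "x \<noteq> 0" "x \<in> max_ideal" using max_ideal_nonzero[OF loc assms(2)] by blast
  moreover have "tau (1 + r * x) = 1" for r
    using True unit_add_max_ideal[OF loc one_in_units ideal_mult[OF is_ideal_max_ideal[OF loc] \<open>x \<in> max_ideal\<close>]]
    unfolding trivial_mult_char_def by blast
  ultimately show ?thesis unfolding char_kernel_ideal_def by blast
next
  case False
  then have "char_kernel_ideal tau \<noteq> {0}"
    using assms(4) conductor_eq_char_kernel_ideal[OF loc tau] unfolding primitive_mult_char_def by simp
  then show ?thesis using ideal_zero[OF is_ideal_char_kernel_ideal[OF loc tau]] by blast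
qed

lemma nonprimitive_mult_char_square_zero_ideal:
  fixes tau :: "'a::{comm_ring_1,finite} \<Rightarrow> complex"
  assumes loc: "local_ring TYPE('a)" and "\<not> is_field_ring TYPE('a)"
    and tau: "mult_char tau" and "\<not> primitive_mult_char tau"
  shows "\<exists>I. is_ideal I \<and> I \<noteq> {0} \<and> (\<forall>x\<in>I. x * x = 0) \<and> (\<forall>x\<in>I. tau (1 + x) = 1)"
proof -
  obtain x where x: "x \<noteq> 0" "x \<in> char_kernel_ideal tau"
    using nonprimitive_mult_char_kernel_nonzero[OF assms] by blast
  obtain s where s: "s * x \<noteq> 0" and soc: "\<forall>m\<in>max_ideal. s * x * m = 0"
    using socle_multiple[OF loc x(1)] by blast
  define I where "I = range (\<lambda>r. r * (s * x))"
  have "s * x \<in> max_ideal"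
    using x(2) ideal_mult[OF is_ideal_max_ideal[OF loc]] unfolding char_kernel_ideal_def by blast
  then have sq: "s * x * (s * x) = 0" using soc by blast
  have "\<forall>y\<in>I. y * y = 0"
  proof
    fix y assume "y \<in> I"
    then obtain r where "y = r * (s * x)" unfolding I_def by blast
    then have "y * y = (r * r) * (s * x * (s * x))" by (simp only: mult_ac)
    then show "y * y = 0" using sq by simp
  qed
  moreover have "\<forall>y\<in>I. tau (1 + y) = 1"
  proof
    fix y assume "y \<in> I"
    then obtain r where "y = (r * s) * x" unfolding I_def by (auto simp: mult.assoc)
    then show "tau (1 + y) = 1" using x(2) unfolding char_kernel_ideal_def by blast
  qed
  moreover have "s * x \<in> I" unfolding I_def by (rule range_eqI[where x=1]) simp
  then have "I \<noteq> {0}" using s by blast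
  ultimately show ?thesis using is_ideal_principal unfolding I_def by blast
qed

subsection \<open>Vanishing of the twisted Kloosterman sum\<close>

lemma kloosterman_summand_shift:
  fixes psi tau :: "'a::comm_ring_1 \<Rightarrow> complex"
  assumes psi: "add_char psi" and tau: "mult_char tau"
    and u: "u \<in> units" and x: "x * x = 0" "tau (1 + x) = 1"
  shows "tau (u * (1 + x)) * psi (u * (1 + x) + a * unit_inv (u * (1 + x))) =
    tau u * psi (u + a * unit_inv u) * psi ((u - a * unit_inv u) * x)"
proof -
  have "(1 + x) * (1 - x) = 1" using x(1) by (simp add: algebra_simps)
  then have ux: "1 + x \<in> units" by (rule units_if_mult_eq_one)
  have "(u * (1 + x)) * (unit_inv u * (1 - x)) = (u * unit_inv u) * ((1 + x) * (1 - x))"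
    by (simp only: mult_ac)
  also have "\<dots> = 1" using unit_inv_right[OF u] \<open>(1 + x) * (1 - x) = 1\<close> by simp
  finally have inv: "unit_inv (u * (1 + x)) = unit_inv u * (1 - x)" by (rule unit_inv_eq)
  have "u * (1 + x) + a * unit_inv (u * (1 + x)) = (u + a * unit_inv u) + (u - a * unit_inv u) * x"
    unfolding inv by (simp add: algebra_simps)
  then show ?thesis
    using psi mult_char_mult[OF tau u ux] x(2) unfolding add_char_def by simp
qed

lemma kloosterman_eq_zero_square_zero_ideal:
  fixes psi tau :: "'a::{comm_ring_1,finite} \<Rightarrow> complex"
  assumes I: "is_ideal I" "\<forall>x\<in>I. x * x = 0"
    and psi: "add_char psi" "y0 \<in> I" "psi y0 \<noteq> 1"
    and tau: "mult_char tau" "\<forall>x\<in>I. tau (1 + x) = 1"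
    and a: "\<forall>u\<in>units. u - a * unit_inv u \<in> units"
  shows "kloosterman psi tau a = 0"
proof -
  define f where "f u = tau u * psi (u + a * unit_inv u)" for u
  have shift: "sum f units = (\<Sum>u\<in>units. f (u * (1 + x)))" if x: "x \<in> I" for x
  proof -
    have "(1 + x) * (1 - x) = 1" using I(2) x by (simp add: algebra_simps)
    then have ux: "1 + x \<in> units" by (rule units_if_mult_eq_one)
    then have "bij_betw (\<lambda>u. u * (1 + x)) units units"
      by (intro bij_betw_byWitness[where f'="\<lambda>u. u * unit_inv (1 + x)"])
        (auto simp: mult.assoc unit_inv_right mult.commute[of "unit_inv (1 + x)"]
          intro: units_mult_closed unit_inv_in_units)
    then show ?thesis by (rule sum.reindex_bij_betw[symmetric])
  qed
  have inner: "(\<Sum>x\<in>I. f (u * (1 + x))) = 0" if u: "u \<in> units" for u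
  proof -
    have "(\<Sum>x\<in>I. f (u * (1 + x))) = (\<Sum>x\<in>I. f u * psi ((u - a * unit_inv u) * x))"
      unfolding f_def using kloosterman_summand_shift[OF psi(1) tau(1) u] I(2) tau(2)
      by (intro sum.cong) (simp_all add: mult.commute[of _ x])
    also have "\<dots> = f u * (\<Sum>x\<in>I. psi ((u - a * unit_inv u) * x))"
      by (simp add: sum_distrib_left)
    also have "\<dots> = 0"
      using add_char_sum_ideal_mult_unit_eq_zero[OF psi(1) I(1) psi(2,3)] a u by simp
    finally show ?thesis .
  qed
  have "of_nat (card I) * sum f units = (\<Sum>x\<in>I. sum f units)" by simp
  also have "\<dots> = (\<Sum>x\<in>I. \<Sum>u\<in>units. f (u * (1 + x)))" using shift by (rule sum.cong[OF refl])
  also have "\<dots> = (\<Sum>u\<in>units. \<Sum>x\<in>I. f (u * (1 + x)))" by (rule sum.swap)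
  also have "\<dots> = 0" by (simp add: inner)
  finally have "of_nat (card I) * sum f units = 0" .
  moreover have "card I \<noteq> 0" using ideal_zero[OF I(1)] by auto
  ultimately show ?thesis unfolding kloosterman_def f_def by simp
qed

subsection \<open>When \<open>u - a u\<^sup>-\<^sup>1\<close> is always a unit\<close>

lemma newton_sqrt_step:
  fixes v w a :: "'a::comm_ring_1"
  assumes "2 * v * w = 1"
  shows "(v - (v * v - a) * w) * (v - (v * v - a) * w) - a = (v * v - a) * (v * v - a) * (w * w)"
proof -
  have "(v - (v * v - a) * w) * (v - (v * v - a) * w) - a =
      (v * v - a) - (2 * v * w) * (v * v - a) + (v * v - a) * (v * v - a) * (w * w)"
    by (simp add: algebra_simps mult_2)
  then show ?thesis using assms by simp
qed

lemma unit_square_lift: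
  assumes loc: "local_ring TYPE('a::{comm_ring_1,finite})"
    and two: "(2::'a) \<in> units" and a: "(a::'a) \<in> units" and u: "u \<in> units"
    and close: "u * u - a \<in> max_ideal"
  shows "a \<in> unit_squares"
proof -
  define e where "e = u * u - a"
  have MI: "is_ideal (max_ideal::'a set)" by (rule is_ideal_max_ideal[OF loc])
  have eM: "e \<in> max_ideal" unfolding e_def by (rule close)
  have newton: "\<exists>v c. v \<in> units \<and> v * v - a = e ^ (2 ^ n) * c" for n
  proof (induction n)
    case 0
    show ?case by (rule exI[of _ u], rule exI[of _ 1]) (simp add: u e_def)
  next
    case (Suc n)
    then obtain v c where v: "v \<in> units" and vc: "v * v - a = e ^ (2 ^ n) * c" by blast
    define w where "w = unit_inv (2 * v)"
    define v' where "v' = v - (v * v - a) * w"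
    have "2 * v * w = 1" unfolding w_def by (rule unit_inv_right[OF units_mult_closed[OF two v]])
    then have "v' * v' - a = (v * v - a) * (v * v - a) * (w * w)"
      unfolding v'_def by (rule newton_sqrt_step)
    also have "\<dots> = e ^ (2 ^ Suc n) * (c * c * (w * w))"
      unfolding vc by (simp add: power_add[symmetric] mult_2 mult_ac)
    finally have eq: "v' * v' - a = e ^ (2 ^ Suc n) * (c * c * (w * w))" .
    have "e ^ (2 ^ Suc n) \<in> max_ideal"
      using ideal_power[OF MI eM] by simp
    then have "a + e ^ (2 ^ Suc n) * (c * c * (w * w)) \<in> units"
      using unit_add_max_ideal[OF loc a] ideal_mult[OF MI] by (metis mult.commute)
    then have "v' \<in> units" using eq units_mult_left[of v' v'] by (simp add: algebra_simps)
    then show ?case using eq by blast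
  qed
  \<comment> \<open>\<open>e\<close> is nilpotent, so the iteration reaches an exact square root\<close>
  obtain k where k: "e ^ k = 0" using max_ideal_nilpotent[OF loc eM] by blast
  obtain v c where v: "v \<in> units" and vc: "v * v - a = e ^ (2 ^ k) * c" using newton by blast
  have "e ^ (2 ^ k) = e ^ k * e ^ (2 ^ k - k)"
    by (simp add: power_add[symmetric] less_imp_le)
  then have "v * v = a" using vc k by simp
  then show ?thesis unfolding unit_squares_def using v by blast
qed

lemma unit_diff_nonunit_mult_unit_inv:
  assumes loc: "local_ring TYPE('a::{comm_ring_1,finite})"
    and u: "(u::'a) \<in> units" and a: "a \<notin> units"
  shows "u - a * unit_inv u \<in> units"
  using unit_diff_max_ideal[OF loc u ideal_mult[OF is_ideal_max_ideal[OF loc] nonunit_in_max_ideal[OF loc a]],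
      of "unit_inv u"]
  by (simp add: mult.commute)

lemma unit_diff_nonsquare_mult_unit_inv:
  assumes loc: "local_ring TYPE('a::{comm_ring_1,finite})"
    and odd: "odd (residue_char TYPE('a))"
    and u: "(u::'a) \<in> units" and a: "a \<notin> unit_squares"
  shows "u - a * unit_inv u \<in> units"
proof (cases "a \<in> units")
  case False
  then show ?thesis by (rule unit_diff_nonunit_mult_unit_inv[OF loc u])
next
  case True
  show ?thesis
  proof (rule ccontr)
    assume "u - a * unit_inv u \<notin> units"
    then have "u * (u - a * unit_inv u) \<in> max_ideal"
      using ideal_mult[OF is_ideal_max_ideal[OF loc] nonunit_in_max_ideal[OF loc]] by blast
    moreover have "u * (u - a * unit_inv u) = u * u - a"
      using unit_inv_right[OF u] by (simp add: algebra_simps)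
    ultimately have "a \<in> unit_squares"
      using unit_square_lift[OF loc two_in_units[OF loc odd] True u] by simp
    then show False using a by simp
  qed
qed

theorem mainTheorem3:
  fixes psi tau :: "'a::{comm_ring_1, finite} \<Rightarrow> complex"
  assumes "local_ring TYPE('a)"
    and "\<not> is_field_ring TYPE('a)"
    and "primitive_add_char psi"
    and "mult_char tau"
    and "\<not> primitive_mult_char tau"
  shows "(\<forall>a. a \<notin> units \<longrightarrow> kloosterman psi tau a = 0) \<and>
         (odd (residue_char TYPE('a)) \<longrightarrow>
            (\<forall>a. a \<notin> unit_squares \<longrightarrow> kloosterman psi tau a = 0))"
proof -
  obtain I where I: "is_ideal I" "I \<noteq> {0}" "\<forall>x\<in>I. x * x = 0"
    and tauI: "\<forall>x\<in>I. tau (1 + x) = 1"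
    using nonprimitive_mult_char_square_zero_ideal[OF assms(1,2,4,5)] by blast
  obtain y0 where y0: "y0 \<in> I" "psi y0 \<noteq> 1"
    using assms(3) I(1,2) unfolding primitive_add_char_def by blast
  have add: "add_char psi" using assms(3) unfolding primitive_add_char_def by blast
  have vanish: "kloosterman psi tau a = 0" if "\<forall>u\<in>units. u - a * unit_inv u \<in> units" for a
    by (rule kloosterman_eq_zero_square_zero_ideal[OF I(1,3) add y0 assms(4) tauI that])
  show ?thesis
    using vanish unit_diff_nonunit_mult_unit_inv[OF assms(1)]
      unit_diff_nonsquare_mult_unit_inv[OF assms(1)] by blast
qed

end
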